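(* Let $A\subset\mathcal H$ be an affine subspace such that $A\cap\operatorname{conv}(\frac12(d+\mathcal W))$ is a face of $\operatorname{conv}(\frac12(d+\mathcal W))$, and suppose there exists $\bar c\in\mathcal C\cap A$ with $\bar c\notin\operatorname{conv}(\frac12(d+\mathcal W))$. Let $\bar x\in A$. If $\bar x=\frac12(\bar a+\bar a')$ with $\bar a,\bar a'\in\mathcal C$, then $\bar a,\bar a'\in A$.
   Context: Setting: $G$ compact Lie group, $K\subset G$ closed, $G/K$ connected almost effective, isotropy representation $\mathfrak p=\mathfrak p_1\oplus\cdots\oplus\mathfrak p_r$ ($r\ge2$) with pairwise inequivalent $\mathbb R$-irreducible summands, $d_i=\dim\mathfrak p_i$, $d=(d_1,\dots,d_r)$, $n=\sum d_i$. The scalar curvature of the metric $e^{q_i}Q$ on $\mathfrak p_i$ is $S(q)=\sum_{w\in\mathcal W}A_we^{w\cdot q}$, $\mathcal W\subset\mathbb Z^r$ finite, $A_w\ne0$, each $w$ of type I (one entry $-1$), type II (one entry $1$, two entries $-1$) or type III (one entry $1$, one entry $-2$), other entries $0$; $A_w>0$ for type I and $<0$ otherwise. Assume $\dim\operatorname{conv}(\mathcal W)=r-1$. $J$ is the symmetric bilinear form with $J(p,p)=\frac1{n-1}(\sum p_i)^2-\sum p_i^2/d_i$. $u=\sum_{\bar c\in\mathcal C}F_{\bar c}e^{\bar c\cdot q}$ ($\mathcal C$ finite, $F_{\bar c}\ne0$) is a superpotential: for every $\xi$, $\sum_{(\bar a,\bar c)\in\mathcal C^2,\ \bar a+\bar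 c=\xi}J(\bar a,\bar c)F_{\bar a}F_{\bar c}$ equals $A_w$ if $\xi=d+w$, $w\in\mathcal W$, and $0$ otherwise; $\mathcal C$ is normalised to lie in the hyperplane $\mathcal H=\{\sum\bar x_i=\frac12(n-1)\}$, which contains $\frac12(d+\mathcal W)$. *)

theory Defs
  imports "HOL-Analysis.Analysis"
begin

text \<open>Vectors in R^r are modelled as real^'r for a finite index type 'r (r = CARD('r)).
  The dimensions d_i of the isotropy summands are given by dims :: 'r => nat.\<close>

definition dvec :: "('r::finite \<Rightarrow> nat) \<Rightarrow> real^'r" where
  "dvec dims = (\<chi> i. real (dims i))"

definition ntot :: "('r::finite \<Rightarrow> nat) \<Rightarrow> real" where
  "ntot dims = (\<Sum>i\<in>UNIV. real (dims i))"

definition typeI :: "real^'r::finite \<Rightarrow> bool" where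
  "typeI w \<longleftrightarrow> (\<exists>i. w $ i = -1 \<and> (\<forall>k. k \<noteq> i \<longrightarrow> w $ k = 0))"

definition typeII :: "real^'r::finite \<Rightarrow> bool" where
  "typeII w \<longleftrightarrow> (\<exists>i j l. i \<noteq> j \<and> i \<noteq> l \<and> j \<noteq> l \<and>
      w $ i = 1 \<and> w $ j = -1 \<and> w $ l = -1 \<and>
      (\<forall>k. k \<noteq> i \<and> k \<noteq> j \<and> k \<noteq> l \<longrightarrow> w $ k = 0))"

definition typeIII :: "real^'r::finite \<Rightarrow> bool" where
  "typeIII w \<longleftrightarrow> (\<exists>i j. i \<noteq> j \<and> w $ i = 1 \<and> w $ j = -2 \<and>
      (\<forall>k. k \<noteq> i \<and> k \<noteq> j \<longrightarrow> w $ k = 0))"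

text \<open>The symmetric bilinear form J (polarisation of the given quadratic form).\<close>
definition Jform :: "('r::finite \<Rightarrow> nat) \<Rightarrow> real^'r \<Rightarrow> real^'r \<Rightarrow> real" where
  "Jform dims p q =
     (\<Sum>i\<in>UNIV. p $ i) * (\<Sum>i\<in>UNIV. q $ i) / (ntot dims - 1)
     - (\<Sum>i\<in>UNIV. p $ i * q $ i / real (dims i))"

definition Hplane :: "('r::finite \<Rightarrow> nat) \<Rightarrow> (real^'r) set" where
  "Hplane dims = {x. (\<Sum>i\<in>UNIV. x $ i) = (ntot dims - 1) / 2}"

text \<open>Superpotential equations for u = sum_{c in C} F c * exp(c.q), with
  scalar curvature S = sum_{w in W} Aw w * exp(w.q).\<close>
definition is_superpotential ::
  "('r::finite \<Rightarrow> nat) \<Rightarrow> (real^'r) set \<Rightarrow> (real^'r \<Rightarrow> real)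
     \<Rightarrow> (real^'r) set \<Rightarrow> (real^'r \<Rightarrow> real) \<Rightarrow> bool" where
  "is_superpotential dims W Aw C F \<longleftrightarrow>
     (\<forall>\<xi>. (\<Sum>(a, c)\<in>{(a, c). a \<in> C \<and> c \<in> C \<and> a + c = \<xi>}. Jform dims a c * F a * F c)
          = (if \<xi> \<in> (\<lambda>w. dvec dims + w) ` W then Aw (\<xi> - dvec dims) else 0))"

end

theory Submission
  imports Defs
begin

text \<open>
  Two distinct exponents \<open>c, c'\<close> of a superpotential cannot both lie strictly on the far side of
  a hyperplane avoiding \<open>P = conv((d + W)/2)\<close>. Perturb the normal \<open>f\<close> so that it
  separates all sums of exponents and let \<open>m\<close> be the \<open>f\<close>-largest exponent. Sums \<open>\<xi>\<close> with
  \<open>f(\<xi>)\<close> beyond \<open>f(d + W)\<close> have vanishing coefficient in \<open>J(u, u)\<close>; this forces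
  \<open>J(m, m) = 0\<close>, and then the largest candidate among \<open>m + n\<close> (\<open>J(m, n) \<noteq> 0\<close>) and \<open>t + t\<close>
  (\<open>J(m, t) = 0\<close>, whence \<open>J(t, t) < 0\<close> since \<open>J\<close> is negative definite on the directions of
  \<open>H\<close>) is attained by a single pair or only by \<open>(t, t)\<close>, giving a nonzero coefficient.

  So every segment joining two exponents meets \<open>P\<close>. Given \<open>c \<in> A \<inter> C\<close> outside \<open>P\<close>, the
  segments from \<open>c\<close> to \<open>a\<close> and to \<open>a'\<close> hit \<open>P\<close> in \<open>p, p'\<close>; a suitable convex combination
  of \<open>p, p'\<close> lies on the line through \<open>c\<close> and the midpoint \<open>x\<close>, hence in the face
  \<open>A \<inter> P\<close>, so \<open>p \<in> A\<close> and therefore \<open>a \<in> A\<close>.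
\<close>

lemma ex_arg_max_finite:
  fixes g :: "'a \<Rightarrow> 'b::linorder"
  assumes "finite S" "S \<noteq> {}"
  shows "\<exists>m\<in>S. \<forall>y\<in>S. g y \<le> g m"
proof -
  have "Max (g ` S) \<in> g ` S" using assms by simp
  then obtain m where "m \<in> S" "Max (g ` S) = g m" by blast
  then show ?thesis using Max_ge[of "g ` S"] assms(1) by auto
qed

lemma exists_inner_nonzero:
  fixes D :: "'a::real_inner set"
  assumes "finite D" "0 \<notin> D"
  shows "\<exists>h. \<forall>v\<in>D. inner h v \<noteq> 0"
  using assms
proof (induction D rule: finite_induct)
  case empty
  then show ?case by auto
next
  case (insert v D)
  then obtain h where h: "\<forall>w\<in>D. inner h w \<noteq> 0" by auto
  have "v \<noteq> 0" using insert.prems by auto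
  have "finite ((\<lambda>w. - inner h w / inner v w) ` insert v D)"
    using insert.hyps(1) by simp
  then obtain t :: real where t: "t \<notin> (\<lambda>w. - inner h w / inner v w) ` insert v D"
    using ex_new_if_finite[OF infinite_UNIV_char_0] by blast
  have "inner (h + t *\<^sub>R v) w \<noteq> 0" if w: "w \<in> insert v D" for w
  proof (cases "inner v w = 0")
    case True
    then show ?thesis using h w \<open>v \<noteq> 0\<close> by (auto simp: inner_add_left)
  next
    case False
    have "t \<noteq> - inner h w / inner v w" using t w by blast
    then show ?thesis using False by (simp add: inner_add_left eq_neg_iff_add_eq_0 field_simps)
  qed
  then show ?case by blast
qed

lemma open_contains_generic:
  fixes U :: "'a::real_inner set"
  assumes "open U" "U \<noteq> {}" "finite D" "0 \<notin> D"
  shows "\<exists>f\<in>U. \<forall>v\<in>D. inner f v \<noteq> 0"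
proof -
  obtain g where "g \<in> U" using assms(2) by blast
  then obtain \<epsilon> where "\<epsilon> > 0" and ball: "ball g \<epsilon> \<subseteq> U"
    using assms(1) open_contains_ball by blast
  obtain h where h: "\<forall>v\<in>D. inner h v \<noteq> 0"
    using exists_inner_nonzero[OF assms(3,4)] by blast
  define \<delta> where "\<delta> = \<epsilon> / (norm h + 1)"
  define B where "B = (\<lambda>v. - inner g v / inner h v) ` D"
  have nh: "norm h + 1 > 0" using norm_ge_zero[of h] by linarith
  then have "\<delta> > 0" using \<open>\<epsilon> > 0\<close> by (simp add: \<delta>_def)
  then have "infinite ({0<..<\<delta>} - B)"
    using infinite_Ioo[of 0 \<delta>] assms(3) by (simp add: B_def Diff_infinite_finite)
  then obtain t where "t \<in> {0<..<\<delta>} - B"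
    using infinite_imp_nonempty by blast
  then have t: "0 < t" "t < \<delta>" "t \<notin> B" by auto
  have "norm (t *\<^sub>R h) \<le> t * (norm h + 1)" using t(1) by simp
  also have "\<dots> < \<epsilon>" using t(2) nh by (simp add: \<delta>_def pos_less_divide_eq)
  finally have "dist g (g + t *\<^sub>R h) < \<epsilon>" by (simp add: dist_norm)
  then have "g + t *\<^sub>R h \<in> U" using ball by auto
  moreover have "inner (g + t *\<^sub>R h) v \<noteq> 0" if "v \<in> D" for v
  proof -
    have "t \<noteq> - inner g v / inner h v" using t(3) that by (auto simp: B_def)
    then show ?thesis using h that by (simp add: inner_add_left eq_neg_iff_add_eq_0 field_simps)
  qed
  ultimately show ?thesis by blast
qed

lemma combine_segments_midpoint:
  fixes b b' c :: "'a::real_vector"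
  assumes "u > 0" "v > 0"
  shows "(1 - u / (u + v)) *\<^sub>R ((1 - u) *\<^sub>R c + u *\<^sub>R b) + (u / (u + v)) *\<^sub>R ((1 - v) *\<^sub>R c + v *\<^sub>R b')
    = (1 - 2 * u * v / (u + v)) *\<^sub>R c + (2 * u * v / (u + v)) *\<^sub>R midpoint b b'"
proof -
  have "u + v \<noteq> 0" using assms by simp
  then have \<mu>: "1 - u / (u + v) = v / (u + v)" by (simp add: field_simps)
  have "v / (u + v) * (1 - u) + u / (u + v) * (1 - v) = (v * (1 - u) + u * (1 - v)) / (u + v)"
    by (simp add: add_divide_distrib)
  also have "\<dots> = ((u + v) - 2 * u * v) / (u + v)"
    by (simp add: algebra_simps)
  also have "\<dots> = 1 - 2 * u * v / (u + v)"
    using \<open>u + v \<noteq> 0\<close> by (simp add: diff_divide_distrib)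
  finally have c: "v / (u + v) * (1 - u) + u / (u + v) * (1 - v) = 1 - 2 * u * v / (u + v)" .
  have m: "(2 * u * v / (u + v)) *\<^sub>R midpoint b b' = (v / (u + v) * u) *\<^sub>R b + (u / (u + v) * v) *\<^sub>R b'"
    by (simp add: midpoint_def scaleR_add_right mult.commute)
  show ?thesis
    unfolding \<mu> c[symmetric] m by (simp only: scaleR_add_right scaleR_scaleR scaleR_add_left add_ac)
qed

lemma affine_face_midpoint:
  fixes A K :: "'a::real_vector set"
  assumes "convex K" "affine A" "(A \<inter> K) face_of K" "c \<in> A" "c \<notin> K"
    and "b \<noteq> c \<Longrightarrow> closed_segment c b \<inter> K \<noteq> {}"
    and "b' \<noteq> c \<Longrightarrow> closed_segment c b' \<inter> K \<noteq> {}"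
    and "midpoint b b' \<in> A"
  shows "b \<in> A"
proof -
  have line: "(1 - t) *\<^sub>R y + t *\<^sub>R y' \<in> A" if "y \<in> A" "y' \<in> A" for t y y'
    using assms(2) that unfolding affine_alt by blast
  consider "b = c" | "b' = c" | "b \<noteq> c" "b' \<noteq> c" by blast
  then show ?thesis
  proof cases
    case 1
    then show ?thesis using assms(4) by simp
  next
    case 2
    have "(1 - 2) *\<^sub>R c + 2 *\<^sub>R midpoint b b' = b"
      using 2 by (simp add: midpoint_def)
    then show ?thesis using line[OF assms(4,8), of 2] by simp
  next
    case 3
    obtain p where "p \<in> closed_segment c b" "p \<in> K" using assms(6) 3(1) by blast
    then obtain u where u: "0 \<le> u" "u \<le> 1" and p: "p = (1 - u) *\<^sub>R c + u *\<^sub>R b" "p \<in> K"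
      unfolding in_segment by blast
    obtain p' where "p' \<in> closed_segment c b'" "p' \<in> K" using assms(7) 3(2) by blast
    then obtain v where v: "0 \<le> v" "v \<le> 1" and p': "p' = (1 - v) *\<^sub>R c + v *\<^sub>R b'" "p' \<in> K"
      unfolding in_segment by blast
    have "u \<noteq> 0" using p assms(5) by auto
    have "v \<noteq> 0" using p' assms(5) by auto
    define \<mu> where "\<mu> = u / (u + v)"
    have \<mu>: "0 < \<mu>" "\<mu> < 1" using u v \<open>u \<noteq> 0\<close> \<open>v \<noteq> 0\<close> by (auto simp: \<mu>_def field_simps)
    \<comment> \<open>z lies both on [p, p'] and on the line through c and the midpoint\<close>
    define z where "z = (1 - \<mu>) *\<^sub>R p + \<mu> *\<^sub>R p'"
    have "z = (1 - 2 * u * v / (u + v)) *\<^sub>R c + (2 * u * v / (u + v)) *\<^sub>R midpoint b b'"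
      unfolding z_def \<mu>_def p(1) p'(1) using u v \<open>u \<noteq> 0\<close> \<open>v \<noteq> 0\<close>
      by (intro combine_segments_midpoint) auto
    then have "z \<in> A" using line[OF assms(4,8)] by simp
    have "z \<in> K" using convexD[OF assms(1) p(2) p'(2), of "1 - \<mu>" \<mu>] \<mu> by (simp add: z_def)
    have "p \<in> A"
    proof (cases "p = p'")
      case True
      then show ?thesis using \<open>z \<in> A\<close> by (simp add: z_def scaleR_left_distrib[symmetric])
    next
      case False
      then have "z \<in> open_segment p p'" using \<mu> unfolding z_def in_segment(2) by blast
      then show ?thesis
        using face_ofD[OF assms(3)] \<open>z \<in> A\<close> \<open>z \<in> K\<close> p(2) p'(2) by blast
    qed
    have "(1 - 1 / u) *\<^sub>R c + (1 / u) *\<^sub>R p = b"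
      using \<open>u \<noteq> 0\<close> by (simp add: p(1) algebra_simps)
    then show ?thesis using line[OF assms(4) \<open>p \<in> A\<close>, of "1 / u"] by simp
  qed
qed

lemma Jform_sym: "Jform dims p q = Jform dims q p"
  unfolding Jform_def by (simp add: mult.commute)

lemma Jform_add_right: "Jform dims p (q + q') = Jform dims p q + Jform dims p q'"
  unfolding Jform_def
  by (simp add: sum.distrib distrib_left add_divide_distrib diff_divide_distrib)

lemma Jform_diff_right: "Jform dims p (q - q') = Jform dims p q - Jform dims p q'"
  unfolding Jform_def
  by (simp add: sum_subtractf right_diff_distrib diff_divide_distrib)

lemma Jform_diff_left: "Jform dims (p - p') q = Jform dims p q - Jform dims p' q"
  using Jform_diff_right[of dims q p p'] by (simp add: Jform_sym)

lemma Jform_self_neg: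
  assumes "\<forall>i. dims i \<ge> 1" "(\<Sum>i\<in>UNIV. v $ i) = 0" "v \<noteq> 0"
  shows "Jform dims v v < 0"
proof -
  obtain i where "v $ i \<noteq> 0" using assms(3) by (metis vec_eq_iff zero_index)
  moreover have "\<And>j. real (dims j) > 0" using assms(1) by (simp add: Suc_le_eq)
  ultimately have "(\<Sum>j\<in>UNIV. v $ j * v $ j / real (dims j)) > 0"
    by (intro sum_pos2[of _ i]) (auto simp: zero_less_mult_iff linorder_neq_iff)
  then show ?thesis using assms(2) by (simp add: Jform_def)
qed

lemma Jform_self_neg_Hplane:
  assumes "\<forall>i. dims i \<ge> 1" "p \<in> Hplane dims" "q \<in> Hplane dims" "p \<noteq> q"
    and "Jform dims p p = 0" "Jform dims p q = 0"
  shows "Jform dims q q < 0"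
proof -
  have "(\<Sum>i\<in>UNIV. (q - p) $ i) = 0"
    using assms(2,3) by (simp add: Hplane_def sum_subtractf)
  then have "Jform dims (q - p) (q - p) < 0"
    using assms(1,4) by (intro Jform_self_neg) auto
  moreover have "Jform dims (q - p) (q - p) = Jform dims q q"
    using assms(5,6) by (simp add: Jform_diff_left Jform_diff_right Jform_sym[of dims q p])
  ultimately show ?thesis by simp
qed

definition quad_coeff :: "('r::finite \<Rightarrow> nat) \<Rightarrow> (real^'r) set \<Rightarrow> (real^'r \<Rightarrow> real) \<Rightarrow> real^'r \<Rightarrow> real"
  where "quad_coeff dims C F \<xi> =
    (\<Sum>(a, c)\<in>{(a, c). a \<in> C \<and> c \<in> C \<and> a + c = \<xi>}. Jform dims a c * F a * F c)"

lemma quad_coeff_outside: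
  assumes "is_superpotential dims W Aw C F" "\<xi> \<notin> (\<lambda>w. dvec dims + w) ` W"
  shows "quad_coeff dims C F \<xi> = 0"
  using assms by (simp add: is_superpotential_def quad_coeff_def)

lemma quad_coeff_single:
  assumes "finite C" "p \<in> C"
    and "\<And>a b. a \<in> C \<Longrightarrow> b \<in> C \<Longrightarrow> a + b = p + p \<Longrightarrow> (a, b) \<noteq> (p, p) \<Longrightarrow> Jform dims a b = 0"
  shows "quad_coeff dims C F (p + p) = Jform dims p p * F p * F p"
proof -
  define S where "S = {(a, c). a \<in> C \<and> c \<in> C \<and> a + c = p + p}"
  have "finite S" unfolding S_def by (rule finite_subset[of _ "C \<times> C"]) (use assms(1) in auto)
  moreover have "(p, p) \<in> S" using assms(2) by (simp add: S_def)
  moreover have "(\<Sum>(a, c)\<in>S - {(p, p)}. Jform dims a c * F a * F c) = 0"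
  proof (intro sum.neutral ballI)
    fix x assume "x \<in> S - {(p, p)}"
    then obtain a b where "x = (a, b)" "a \<in> C" "b \<in> C" "a + b = p + p" "(a, b) \<noteq> (p, p)"
      unfolding S_def by auto
    then show "(case x of (a, c) \<Rightarrow> Jform dims a c * F a * F c) = 0" using assms(3) by simp
  qed
  ultimately have "(\<Sum>(a, c)\<in>S. Jform dims a c * F a * F c) = Jform dims p p * F p * F p"
    by (simp add: sum.remove)
  then show ?thesis by (simp only: quad_coeff_def S_def)
qed

lemma quad_coeff_pair:
  assumes "p \<in> C" "q \<in> C" "p \<noteq> q"
    and "\<And>a b. a \<in> C \<Longrightarrow> b \<in> C \<Longrightarrow> a + b = p + q \<Longrightarrow> (a, b) = (p, q) \<or> (a, b) = (q, p)"
  shows "quad_coeff dims C F (p + q) = 2 * (Jform dims p q * F p * F q)"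
proof -
  have "{(a, c). a \<in> C \<and> c \<in> C \<and> a + c = p + q} = {(p, q), (q, p)}"
    using assms by (auto simp: add.commute)
  then show ?thesis using assms(3) by (simp add: quad_coeff_def Jform_sym[of dims q p])
qed

locale generic_superpotential =
  fixes dims :: "'r::finite \<Rightarrow> nat" and W :: "(real^'r) set" and Aw :: "real^'r \<Rightarrow> real"
    and C :: "(real^'r) set" and F :: "real^'r \<Rightarrow> real" and f :: "real^'r"
  assumes dims_pos: "\<forall>i. dims i \<ge> 1"
    and C_fin: "finite C" and F_nz: "\<forall>c\<in>C. F c \<noteq> 0"
    and superpot: "is_superpotential dims W Aw C F"
    and C_H: "C \<subseteq> Hplane dims"
    and generic: "inj_on (inner f) {a + b |a b. a \<in> C \<and> b \<in> C}"
begin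

definition beyond :: "real^'r \<Rightarrow> bool"
  where "beyond \<xi> \<longleftrightarrow> (\<forall>w\<in>W. f \<bullet> (dvec dims + w) < f \<bullet> \<xi>)"

lemma beyond_mono: "beyond \<xi> \<Longrightarrow> f \<bullet> \<xi> \<le> f \<bullet> \<eta> \<Longrightarrow> beyond \<eta>"
  unfolding beyond_def by force

lemma quad_coeff_beyond: "beyond \<xi> \<Longrightarrow> quad_coeff dims C F \<xi> = 0"
  unfolding beyond_def by (auto intro: quad_coeff_outside[OF superpot])

lemma inner_eq_sum_imp_eq:
  "a \<in> C \<Longrightarrow> b \<in> C \<Longrightarrow> a' \<in> C \<Longrightarrow> b' \<in> C \<Longrightarrow> f \<bullet> (a + b) = f \<bullet> (a' + b') \<Longrightarrow> a + b = a' + b'"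
  using inj_onD[OF generic] by blast

lemma inner_eq_imp_eq:
  assumes "a \<in> C" "b \<in> C" "f \<bullet> a = f \<bullet> b"
  shows "a = b"
proof -
  have "f \<bullet> (a + a) = f \<bullet> (b + b)" using assms(3) by (simp only: inner_add_right)
  then have "a + a = b + b" using assms(1,2) by (intro inner_eq_sum_imp_eq)
  then show ?thesis by (simp add: vec_eq_iff)
qed

end

locale generic_superpotential_max = generic_superpotential +
  fixes m
  assumes m_C: "m \<in> C" and m_max: "\<And>y. y \<in> C \<Longrightarrow> f \<bullet> y \<le> f \<bullet> m"
    and m_beyond: "beyond (m + m)"
begin

lemma below_max: "y \<in> C \<Longrightarrow> y \<noteq> m \<Longrightarrow> f \<bullet> y < f \<bullet> m"
  using m_max[of y] inner_eq_imp_eq[OF _ m_C, of y] by fastforce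

lemma Jform_max_max: "Jform dims m m = 0"
proof -
  have "quad_coeff dims C F (m + m) = Jform dims m m * F m * F m"
  proof (rule quad_coeff_single[OF C_fin m_C])
    fix a b assume ab: "a \<in> C" "b \<in> C" "a + b = m + m" "(a, b) \<noteq> (m, m)"
    then have "f \<bullet> a + f \<bullet> b < f \<bullet> m + f \<bullet> m"
      using below_max[of a] below_max[of b] m_max[of a] m_max[of b] by fastforce
    with ab(3) show "Jform dims a b = 0" by (metis inner_add_right less_irrefl)
  qed
  then show ?thesis using quad_coeff_beyond[OF m_beyond] F_nz m_C by simp
qed

definition orth
  where "orth = {y \<in> C. y \<noteq> m \<and> Jform dims m y = 0}"

definition nonorth
  where "nonorth = {y \<in> C. y \<noteq> m \<and> Jform dims m y \<noteq> 0}"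

lemma inner_double_orth_ne:
  assumes "t \<in> orth" "n \<in> nonorth"
  shows "f \<bullet> (t + t) \<noteq> f \<bullet> (m + n)"
proof
  assume "f \<bullet> (t + t) = f \<bullet> (m + n)"
  then have "t + t = m + n"
    using assms m_C by (intro inner_eq_sum_imp_eq) (auto simp: orth_def nonorth_def)
  then have "Jform dims m t + Jform dims m t = Jform dims m m + Jform dims m n"
    by (metis Jform_add_right)
  then show False
    using assms Jform_max_max by (simp add: orth_def nonorth_def)
qed

lemma not_beyond_nonorth_max:
  assumes n: "n \<in> nonorth" and n_max: "\<forall>y\<in>nonorth. f \<bullet> y \<le> f \<bullet> n"
    and orth_below: "\<forall>y\<in>orth. f \<bullet> (y + y) \<le> f \<bullet> (m + n)"
  shows "\<not> beyond (m + n)"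
proof
  assume "beyond (m + n)"
  have n_C: "n \<in> C" "n \<noteq> m" "Jform dims m n \<noteq> 0" using n by (auto simp: nonorth_def)
  have below: "f \<bullet> a + f \<bullet> b < f \<bullet> m + f \<bullet> n"
    if "a \<in> C" "b \<in> C" "a \<noteq> m" "b \<noteq> m" for a b
  proof -
    have cases: "f \<bullet> y \<le> f \<bullet> n \<or> f \<bullet> y + f \<bullet> y < f \<bullet> m + f \<bullet> n" if "y \<in> C" "y \<noteq> m" for y
    proof (cases "y \<in> nonorth")
      case False
      then have "y \<in> orth" using that by (auto simp: orth_def nonorth_def)
      then have "f \<bullet> (y + y) < f \<bullet> (m + n)"
        using orth_below inner_double_orth_ne[OF _ n] by (blast intro: le_neq_trans)
      then show ?thesis unfolding inner_add_right by blast
    qed (use n_max in auto)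
    from cases[OF that(1,3)] cases[OF that(2,4)] show ?thesis
      using below_max[OF that(1,3)] below_max[OF that(2,4)] by (elim disjE) linarith+
  qed
  have "quad_coeff dims C F (m + n) = 2 * (Jform dims m n * F m * F n)"
  proof (rule quad_coeff_pair[OF m_C n_C(1) n_C(2)[symmetric]])
    fix a b assume ab: "a \<in> C" "b \<in> C" "a + b = m + n"
    show "(a, b) = (m, n) \<or> (a, b) = (n, m)"
    proof (rule ccontr)
      assume "\<not> ?thesis"
      then have "a \<noteq> m" "b \<noteq> m" using ab(3) by (auto simp: add.commute)
      then have "f \<bullet> a + f \<bullet> b < f \<bullet> m + f \<bullet> n" using ab below by blast
      with ab(3) show False by (metis inner_add_right less_irrefl)
    qed
  qed
  then show False
    using quad_coeff_beyond[OF \<open>beyond (m + n)\<close>] n_C F_nz m_C by simp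
qed

lemma Jform_vanishes_on_double_orth_max:
  assumes t: "t \<in> orth" and t_max: "\<forall>y\<in>orth. f \<bullet> y \<le> f \<bullet> t"
    and nonorth_below: "\<forall>y\<in>nonorth. f \<bullet> m + f \<bullet> y < f \<bullet> t + f \<bullet> t"
    and ab: "a \<in> C" "b \<in> C" "a + b = t + t" "(a, b) \<noteq> (t, t)"
  shows "Jform dims a b = 0"
proof -
  have t_C: "t \<in> C" "t \<noteq> m" using t by (auto simp: orth_def)
  have sum: "f \<bullet> a + f \<bullet> b = f \<bullet> t + f \<bullet> t" using ab(3) by (metis inner_add_right)
  have partner: "Jform dims m y = 0" if "y \<in> C" "f \<bullet> m + f \<bullet> y = f \<bullet> t + f \<bullet> t" for y
  proof -
    have "y \<noteq> m" using that(2) below_max[OF t_C] by auto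
    then show ?thesis using that nonorth_below by (force simp: nonorth_def)
  qed
  show ?thesis
  proof (cases "a = m \<or> b = m")
    case True
    then show ?thesis
      using partner[of a] partner[of b] ab(1,2) sum Jform_sym[of dims a m] by (auto simp: add.commute)
  next
    case False
    then have "a \<notin> nonorth" "b \<notin> nonorth"
      using nonorth_below below_max[of a] below_max[of b] ab(1,2) sum by fastforce+
    then have "a \<in> orth" "b \<in> orth" using False ab(1,2) by (auto simp: orth_def nonorth_def)
    then have "f \<bullet> a \<le> f \<bullet> t" "f \<bullet> b \<le> f \<bullet> t" using t_max by blast+
    then have "f \<bullet> a = f \<bullet> t" "f \<bullet> b = f \<bullet> t" using sum by linarith+
    then have "a = t" "b = t" using inner_eq_imp_eq ab(1,2) t_C(1) by blast+
    with ab(4) show ?thesis by simp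
  qed
qed

lemma not_beyond_orth_max:
  assumes t: "t \<in> orth" and t_max: "\<forall>y\<in>orth. f \<bullet> y \<le> f \<bullet> t"
    and nonorth_below: "\<forall>y\<in>nonorth. f \<bullet> (m + y) \<le> f \<bullet> (t + t)"
  shows "\<not> beyond (t + t)"
proof
  assume "beyond (t + t)"
  have t_C: "t \<in> C" "t \<noteq> m" "Jform dims m t = 0" using t by (auto simp: orth_def)
  have "\<forall>y\<in>nonorth. f \<bullet> m + f \<bullet> y < f \<bullet> t + f \<bullet> t"
  proof
    fix y assume "y \<in> nonorth"
    then have "f \<bullet> (m + y) < f \<bullet> (t + t)"
      using nonorth_below inner_double_orth_ne[OF t] by (metis le_neq_trans)
    then show "f \<bullet> m + f \<bullet> y < f \<bullet> t + f \<bullet> t" unfolding inner_add_right .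
  qed
  then have "quad_coeff dims C F (t + t) = Jform dims t t * F t * F t"
    using Jform_vanishes_on_double_orth_max[OF t t_max] by (intro quad_coeff_single[OF C_fin t_C(1)])
  moreover have "Jform dims t t < 0"
    using Jform_self_neg_Hplane[OF dims_pos _ _ t_C(2)[symmetric] Jform_max_max t_C(3)] m_C t_C(1) C_H
    by blast
  ultimately show False
    using quad_coeff_beyond[OF \<open>beyond (t + t)\<close>] F_nz t_C(1) by simp
qed

lemma beyond_double_eq_max:
  assumes "e \<in> C" "beyond (e + e)"
  shows "e = m"
proof (rule ccontr)
  assume "e \<noteq> m"
  \<comment> \<open>the f-largest of these sums is forced to have a nonzero coefficient\<close>
  define S where "S = (\<lambda>y. m + y) ` nonorth \<union> (\<lambda>y. y + y) ` orth"
  have e: "e \<in> nonorth \<or> e \<in> orth" using assms(1) \<open>e \<noteq> m\<close> by (auto simp: nonorth_def orth_def)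
  have "finite S" using C_fin by (simp add: S_def nonorth_def orth_def)
  moreover have "S \<noteq> {}" using e by (auto simp: S_def)
  ultimately obtain \<xi> where \<xi>: "\<xi> \<in> S" and \<xi>_max: "\<forall>\<eta>\<in>S. f \<bullet> \<eta> \<le> f \<bullet> \<xi>"
    using ex_arg_max_finite by blast
  have "f \<bullet> (e + e) \<le> f \<bullet> \<xi>"
  proof (cases "e \<in> nonorth")
    case True
    then have "f \<bullet> (m + e) \<le> f \<bullet> \<xi>" using \<xi>_max by (auto simp: S_def)
    then show ?thesis using m_max[OF assms(1)] unfolding inner_add_right by linarith
  next
    case False
    then show ?thesis using e \<xi>_max by (auto simp: S_def)
  qed
  then have "beyond \<xi>" by (rule beyond_mono[OF assms(2)])
  from \<xi> consider n where "n \<in> nonorth" "\<xi> = m + n" | t where "t \<in> orth" "\<xi> = t + t"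
    unfolding S_def by blast
  then show False
  proof cases
    case (1 n)
    have "\<forall>y\<in>nonorth. f \<bullet> y \<le> f \<bullet> n"
    proof
      fix y assume "y \<in> nonorth"
      then have "f \<bullet> (m + y) \<le> f \<bullet> (m + n)" using \<xi>_max 1(2) by (auto simp: S_def)
      then show "f \<bullet> y \<le> f \<bullet> n" unfolding inner_add_right by linarith
    qed
    moreover have "\<forall>y\<in>orth. f \<bullet> (y + y) \<le> f \<bullet> (m + n)" using \<xi>_max 1(2) by (auto simp: S_def)
    ultimately show False using not_beyond_nonorth_max 1 \<open>beyond \<xi>\<close> by blast
  next
    case (2 t)
    have "\<forall>y\<in>orth. f \<bullet> y \<le> f \<bullet> t"
    proof
      fix y assume "y \<in> orth"
      then have "f \<bullet> (y + y) \<le> f \<bullet> (t + t)" using \<xi>_max 2(2) by (auto simp: S_def)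
      then show "f \<bullet> y \<le> f \<bullet> t" unfolding inner_add_right by linarith
    qed
    moreover have "\<forall>y\<in>nonorth. f \<bullet> (m + y) \<le> f \<bullet> (t + t)" using \<xi>_max 2(2) by (auto simp: S_def)
    ultimately show False using not_beyond_orth_max 2 \<open>beyond \<xi>\<close> by blast
  qed
qed

end

context generic_superpotential
begin

lemma beyond_double_unique:
  assumes "c \<in> C" "c' \<in> C" "beyond (c + c)" "beyond (c' + c')"
  shows "c = c'"
proof -
  obtain m where m: "m \<in> C" "\<forall>y\<in>C. f \<bullet> y \<le> f \<bullet> m"
    using ex_arg_max_finite[OF C_fin] assms(1) by blast
  have "f \<bullet> (c + c) \<le> f \<bullet> (m + m)" using m(2) assms(1) unfolding inner_add_right by fastforce
  then have "beyond (m + m)" by (rule beyond_mono[OF assms(3)])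
  then interpret generic_superpotential_max dims W Aw C F f m
    using m by unfold_locales auto
  show ?thesis using beyond_double_eq_max assms by metis
qed

end

lemma superpotential_beyond_unique:
  fixes g :: "real^'r::finite"
  assumes dims_pos: "\<forall>i. dims i \<ge> 1" and W_fin: "finite W"
    and C_fin: "finite C" and F_nz: "\<forall>c\<in>C. F c \<noteq> 0"
    and superpot: "is_superpotential dims W Aw C F" and C_H: "C \<subseteq> Hplane dims"
    and "c \<in> C" "c' \<in> C"
    and sep: "\<forall>w\<in>W. g \<bullet> ((1/2) *\<^sub>R (dvec dims + w)) < g \<bullet> c"
      "\<forall>w\<in>W. g \<bullet> ((1/2) *\<^sub>R (dvec dims + w)) < g \<bullet> c'"
  shows "c = c'"
proof -
  define U where "U = (\<Inter>w\<in>W. {f. f \<bullet> (dvec dims + w) < f \<bullet> c + f \<bullet> c}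
                             \<inter> {f. f \<bullet> (dvec dims + w) < f \<bullet> c' + f \<bullet> c'})"
  have "open U" unfolding U_def using W_fin by (auto intro!: open_Collect_less continuous_intros)
  have "g \<in> U" using sep by (auto simp: U_def)
  define Sums where "Sums = {a + b |a b. a \<in> C \<and> b \<in> C}"
  define D where "D = (\<lambda>(u, v). u - v) ` {(u, v) \<in> Sums \<times> Sums. u \<noteq> v}"
  have "Sums = (\<lambda>(a, b). a + b) ` (C \<times> C)" unfolding Sums_def by auto
  then have "finite Sums" using C_fin by simp
  moreover have "D \<subseteq> (\<lambda>(u, v). u - v) ` (Sums \<times> Sums)" unfolding D_def by auto
  ultimately have "finite D" by (simp add: finite_subset)
  moreover have "0 \<notin> D" unfolding D_def by auto
  ultimately obtain f where f: "f \<in> U" and generic: "\<forall>v\<in>D. f \<bullet> v \<noteq> 0"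
    using open_contains_generic \<open>open U\<close> \<open>g \<in> U\<close> by blast
  have "inj_on (inner f) Sums"
  proof (rule inj_onI, rule ccontr)
    fix u v assume "u \<in> Sums" "v \<in> Sums" "f \<bullet> u = f \<bullet> v" "u \<noteq> v"
    moreover from this have "u - v \<in> D" unfolding D_def by (intro image_eqI[where x = "(u, v)"]) auto
    ultimately show False using generic by (auto simp: inner_diff_right)
  qed
  then interpret generic_superpotential dims W Aw C F f
    using dims_pos C_fin F_nz superpot C_H by unfold_locales (simp_all add: Sums_def)
  have "beyond (c + c)" "beyond (c' + c')"
    using f unfolding beyond_def inner_add_right by (auto simp: U_def inner_add_right)
  then show ?thesis using beyond_double_unique \<open>c \<in> C\<close> \<open>c' \<in> C\<close> by blast
qed

lemma superpotential_segment_meets_hull: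
  assumes dims_pos: "\<forall>i. dims i \<ge> 1" and W_fin: "finite W" and "W \<noteq> {}"
    and C_fin: "finite C" and F_nz: "\<forall>c\<in>C. F c \<noteq> 0"
    and superpot: "is_superpotential dims W Aw C F" and C_H: "C \<subseteq> Hplane dims"
    and "c \<in> C" "c' \<in> C" "c \<noteq> c'"
  shows "closed_segment c c' \<inter> convex hull ((\<lambda>w. (1/2) *\<^sub>R (dvec dims + w)) ` W) \<noteq> {}"
proof
  define P where "P = (\<lambda>w. (1/2) *\<^sub>R (dvec dims + w)) ` W"
  assume "closed_segment c c' \<inter> convex hull P = {}"
  moreover have "compact (convex hull P)" using W_fin by (simp add: P_def finite_imp_compact_convex_hull)
  moreover have "convex hull P \<noteq> {}" using \<open>W \<noteq> {}\<close> by (simp add: P_def)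
  ultimately obtain g \<beta> where hull: "\<forall>x\<in>convex hull P. g \<bullet> x < \<beta>"
      and seg: "\<forall>x\<in>closed_segment c c'. \<beta> < g \<bullet> x"
    using separating_hyperplane_compact_closed[of "convex hull P" "closed_segment c c'"]
    by (auto simp: Int_commute)
  have below: "\<forall>w\<in>W. g \<bullet> ((1/2) *\<^sub>R (dvec dims + w)) < \<beta>"
  proof
    fix w assume "w \<in> W"
    then have "(1/2) *\<^sub>R (dvec dims + w) \<in> convex hull P" unfolding P_def by (intro hull_inc) auto
    then show "g \<bullet> ((1/2) *\<^sub>R (dvec dims + w)) < \<beta>" using hull by blast
  qed
  have "\<beta> < g \<bullet> c" "\<beta> < g \<bullet> c'" using seg by auto
  then have "\<forall>w\<in>W. g \<bullet> ((1/2) *\<^sub>R (dvec dims + w)) < g \<bullet> c"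
    "\<forall>w\<in>W. g \<bullet> ((1/2) *\<^sub>R (dvec dims + w)) < g \<bullet> c'"
    using below by (blast intro: less_trans)+
  then have "c = c'" by (rule superpotential_beyond_unique[OF assms(1,2,4-9)])
  with \<open>c \<noteq> c'\<close> show False ..
qed

theorem lemma3p5:
  fixes dims :: "'r::finite \<Rightarrow> nat"
    and W :: "(real^'r) set" and Aw :: "real^'r \<Rightarrow> real"
    and C :: "(real^'r) set" and F :: "real^'r \<Rightarrow> real"
    and A :: "(real^'r) set" and x a a' :: "real^'r"
  assumes r2: "CARD('r) \<ge> 2"
    and dims_pos: "\<forall>i. dims i \<ge> 1"
    and W_fin: "finite W"
    and W_types: "\<forall>w\<in>W. typeI w \<or> typeII w \<or> typeIII w"
    and Aw_nz: "\<forall>w\<in>W. Aw w \<noteq> 0"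
    and Aw_pos: "\<forall>w\<in>W. typeI w \<longrightarrow> Aw w > 0"
    and Aw_neg: "\<forall>w\<in>W. \<not> typeI w \<longrightarrow> Aw w < 0"
    and W_dim: "aff_dim (convex hull W) = int CARD('r) - 1"
    and C_fin: "finite C"
    and F_nz: "\<forall>c\<in>C. F c \<noteq> 0"
    and superpot: "is_superpotential dims W Aw C F"
    and C_H: "C \<subseteq> Hplane dims"
    and A_aff: "affine A" and A_H: "A \<subseteq> Hplane dims"
    and A_face: "(A \<inter> convex hull ((\<lambda>w. (1/2) *\<^sub>R (dvec dims + w)) ` W))
                   face_of convex hull ((\<lambda>w. (1/2) *\<^sub>R (dvec dims + w)) ` W)"
    and c_ex: "\<exists>c\<in>C \<inter> A. c \<notin> convex hull ((\<lambda>w. (1/2) *\<^sub>R (dvec dims + w)) ` W)"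
    and x_A: "x \<in> A"
    and a_C: "a \<in> C" and a'_C: "a' \<in> C"
    and x_eq: "x = (1/2) *\<^sub>R (a + a')"
  shows "a \<in> A \<and> a' \<in> A"
proof -
  have "W \<noteq> {}" using W_dim r2 by auto
  obtain c where c: "c \<in> C" "c \<in> A" "c \<notin> convex hull ((\<lambda>w. (1/2) *\<^sub>R (dvec dims + w)) ` W)"
    using c_ex by blast
  have meets: "b \<noteq> c \<Longrightarrow> closed_segment c b \<inter> convex hull ((\<lambda>w. (1/2) *\<^sub>R (dvec dims + w)) ` W) \<noteq> {}"
    if "b \<in> C" for b
    using superpotential_segment_meets_hull[OF dims_pos W_fin \<open>W \<noteq> {}\<close> C_fin F_nz superpot C_H c(1) that]
    by blast
  have "midpoint a a' \<in> A" "midpoint a' a \<in> A" using x_A x_eq by (simp_all add: midpoint_def add.commute)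
  then show ?thesis
    using affine_face_midpoint[OF convex_convex_hull A_aff A_face c(2,3) meets[OF a_C] meets[OF a'_C]]
      affine_face_midpoint[OF convex_convex_hull A_aff A_face c(2,3) meets[OF a'_C] meets[OF a_C]]
    by simp
qed

end
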